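(* Let $k$ be odd and, for $1\le m\le n$, let $C_m$ be the set of positions with exactly $m$ coordinates in $\{0,k-1\}$ and all other coordinates equal to $(k-1)/2$. Then every combination $g$ satisfies $g(C_m)=C_m$ for all $m$, and $$\prod_{m=1}^{n}\operatorname{sgn}\big(g|_{C_m}\big)=1.$$ Equivalently, the quantity $C=\prod_{m=1}^n\operatorname{sgn}(\sigma_m)$, where $\sigma_m$ is the permutation of the cubies of $C_m$ relating a state to a fixed reference state, is preserved by every combination.
   Context: Fix integers $k\ge2$, $n\ge3$, $M=\{0,\dots,k-1\}$. Positions are $p\in M^n$. For distinct $i,j$, $\psi_{i,j}:M^n\to M^n$ is $(\psi_{i,j}p)_i=k-1-p_j$, $(\psi_{i,j}p)_j=p_i$, other coordinates unchanged. A move is given by distinct $i,j$ and constants $c_l\in M$ ($l\notin\{i,j\}$): it sends each position $p$ with $p_l=c_l$ ($l\notin\{i,j\}$) to $\psi_{i,j}(p)$ and fixes the other positions; a combination is a finite sequence of moves, regarded as the composite permutation of $M^n$. *)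

theory Defs
  imports "HOL-Combinatorics.Permutations"
begin

text \<open>Positions p in M^n with M = {0..k-1}, coded as functions nat => nat that are
  < k on {0..<n} and 0 outside.\<close>
definition positions :: "nat \<Rightarrow> nat \<Rightarrow> (nat \<Rightarrow> nat) set" where
  "positions k n = {p. (\<forall>i<n. p i < k) \<and> (\<forall>i. n \<le> i \<longrightarrow> p i = 0)}"

definition psi :: "nat \<Rightarrow> nat \<Rightarrow> nat \<Rightarrow> (nat \<Rightarrow> nat) \<Rightarrow> (nat \<Rightarrow> nat)" where
  "psi k i j p = p(i := k - 1 - p j, j := p i)"

definition move :: "nat \<Rightarrow> nat \<Rightarrow> nat \<Rightarrow> nat \<Rightarrow> (nat \<Rightarrow> nat) \<Rightarrow> (nat \<Rightarrow> nat) \<Rightarrow> (nat \<Rightarrow> nat)" where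
  "move k n i j c p =
     (if \<forall>l<n. l \<noteq> i \<and> l \<noteq> j \<longrightarrow> p l = c l then psi k i j p else p)"

definition valid_move :: "nat \<Rightarrow> nat \<Rightarrow> nat \<times> nat \<times> (nat \<Rightarrow> nat) \<Rightarrow> bool" where
  "valid_move k n m = (case m of (i, j, c) \<Rightarrow>
     i < n \<and> j < n \<and> i \<noteq> j \<and> (\<forall>l<n. l \<noteq> i \<and> l \<noteq> j \<longrightarrow> c l < k))"

definition apply_moves :: "nat \<Rightarrow> nat \<Rightarrow> (nat \<times> nat \<times> (nat \<Rightarrow> nat)) list \<Rightarrow> (nat \<Rightarrow> nat) \<Rightarrow> (nat \<Rightarrow> nat)" where
  "apply_moves k n ms = foldr (\<lambda>(i, j, c) f. f \<circ> move k n i j c) ms id"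

definition combination :: "nat \<Rightarrow> nat \<Rightarrow> ((nat \<Rightarrow> nat) \<Rightarrow> (nat \<Rightarrow> nat)) \<Rightarrow> bool" where
  "combination k n g \<longleftrightarrow> (\<exists>ms. (\<forall>m\<in>set ms. valid_move k n m) \<and> g = apply_moves k n ms)"

definition Cset :: "nat \<Rightarrow> nat \<Rightarrow> nat \<Rightarrow> (nat \<Rightarrow> nat) set" where
  "Cset k n m = {p \<in> positions k n.
      card {i. i < n \<and> (p i = 0 \<or> p i = k - 1)} = m \<and>
      (\<forall>i<n. p i \<noteq> 0 \<and> p i \<noteq> k - 1 \<longrightarrow> p i = (k - 1) div 2)}"

end

theory Submission
  imports Defs "HOL-Combinatorics.Cycles"
begin

(* A move fixes every position off its plane {p. p l = c l for l \<notin> {i, j}} and acts on the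
   plane as the quarter turn (a, b) \<mapsto> (k - 1 - b, a) of the two free coordinates.  Positions of
   the sets C_m have all coordinates in {0, h, k - 1}, h = (k - 1) / 2, so the plane meets them
   only if the fixed coordinates lie in this grid, and then only in the 3 x 3 grid of pairs (a, b).
   There the quarter turn fixes the centre (h, h) and cyclically permutes the four edge midpoints
   and the four corners.  If e fixed coordinates are extremal, the edge midpoints lie in C_(e+1)
   and the corners in C_(e+2); so a move is a 4-cycle, an odd permutation, on exactly two of the
   sets and the identity on all others, and the product of the signs is 1 for every move and hence
   for every combination. *)

lemma sign_cycle_of_list:
  "distinct cs \<Longrightarrow> sign (cycle_of_list cs) = (-1) ^ (length cs - 1)"
proof (induction cs rule: cycle_of_list.induct)
  case (1 a b cs)
  have "sign (cycle_of_list (a # b # cs)) = sign (transpose a b) * sign (cycle_of_list (b # cs))"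
    by (simp only: cycle_of_list.simps sign_compose permutation_swap_id permutation_of_cycle)
  also have "\<dots> = (-1) ^ (length (a # b # cs) - 1)"
    using 1 by (simp add: sign_swap_id)
  finally show ?case .
qed simp_all

context
  fixes f :: "'a \<Rightarrow> 'a" and A :: "'a set" and cs :: "'a list"
  assumes distinct: "distinct cs" and subset: "set cs \<subseteq> A"
    and rotates: "map f cs = rotate1 cs" and fixes_rest: "\<And>x. x \<in> A - set cs \<Longrightarrow> f x = x"
begin

lemma eq_cycle_of_list_on: "x \<in> A \<Longrightarrow> f x = cycle_of_list cs x"
proof (cases "x \<in> set cs")
  case True
  have "map f cs = map (cycle_of_list cs) cs"
    using rotates cyclic_rotation[OF distinct, of 1] by simp
  with True show ?thesis by (simp add: map_eq_conv)
next
  case False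
  then show "x \<in> A \<Longrightarrow> ?thesis" by (simp add: fixes_rest id_outside_supp)
qed

lemma cycle_of_list_permutes: "cycle_of_list cs permutes A"
  using cycle_permutes subset by (rule permutes_subset)

lemma bij_betw_if_rotates_cycle: "bij_betw f A A"
  using permutes_imp_bij[OF cycle_of_list_permutes] bij_betw_cong[of A f "cycle_of_list cs" A]
    eq_cycle_of_list_on by blast

lemma sign_on_if_rotates_cycle: "sign_on A f = (-1) ^ (length cs - 1)"
proof -
  have "sign_on A f = sign_on A (cycle_of_list cs)"
    by (rule sign_on_cong) (use eq_cycle_of_list_on in blast)+
  also have "\<dots> = sign (cycle_of_list cs)"
    by (rule sign_on_permutes[OF cycle_of_list_permutes order.refl])
  finally show ?thesis by (simp add: sign_cycle_of_list distinct)
qed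

end

definition even_on_blocks :: "'i set \<Rightarrow> ('i \<Rightarrow> 'a set) \<Rightarrow> ('a \<Rightarrow> 'a) \<Rightarrow> bool" where
  "even_on_blocks I A g \<longleftrightarrow>
     (\<forall>m\<in>I. bij_betw g (A m) (A m)) \<and> (\<Prod>m\<in>I. sign_on (A m) g) = 1"

lemma even_on_blocks_id: "even_on_blocks I A id"
  by (simp add: even_on_blocks_def)

lemma even_on_blocks_comp:
  assumes finite: "\<And>m. m \<in> I \<Longrightarrow> finite (A m)"
    and f: "even_on_blocks I A f" and g: "even_on_blocks I A g"
  shows "even_on_blocks I A (f \<circ> g)"
proof -
  have bij: "bij_betw f (A m) (A m)" "bij_betw g (A m) (A m)" if "m \<in> I" for m
    using f g that by (simp_all add: even_on_blocks_def)
  have "(\<Prod>m\<in>I. sign_on (A m) (f \<circ> g)) = (\<Prod>m\<in>I. sign_on (A m) f * sign_on (A m) g)"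
    by (intro prod.cong refl sign_on_compose bij finite)
  also have "\<dots> = 1"
    using f g by (simp add: prod.distrib even_on_blocks_def)
  finally show ?thesis
    using bij by (auto simp: even_on_blocks_def intro: bij_betw_trans)
qed

abbreviation centre :: "nat \<Rightarrow> nat" where
  "centre k \<equiv> (k - 1) div 2"

lemma centre_of_odd:
  assumes "2 \<le> k" "odd k"
  shows "0 < centre k" "k - 1 = 2 * centre k"
  using assms by (auto elim!: oddE)

(* The nontrivial orbits of the quarter turn (a, b) \<mapsto> (K - b, a) on {0, h, K}^2, indexed by
   the number d of coordinates in {0, K}. *)
definition turn_orbit :: "nat \<Rightarrow> nat \<Rightarrow> nat \<Rightarrow> (nat \<times> nat) list" where
  "turn_orbit h K d =
     (if d = 1 then [(h, 0), (K, h), (h, K), (0, h)]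
      else if d = 2 then [(0, 0), (K, 0), (K, K), (0, K)]
      else [])"

lemma length_turn_orbit: "length (turn_orbit h K d) = (if d = 1 \<or> d = 2 then 4 else 0)"
  by (simp add: turn_orbit_def)

context
  fixes h K :: nat
  assumes h: "0 < h" and K: "K = 2 * h"
begin

lemma distinct_turn_orbit: "distinct (turn_orbit h K d)"
  using h K by (auto simp: turn_orbit_def)

lemma turn_rotates_turn_orbit:
  "map (\<lambda>(a, b). (K - b, a)) (turn_orbit h K d) = rotate1 (turn_orbit h K d)"
  using K by (simp add: turn_orbit_def)

lemma mem_turn_orbit:
  assumes "(a, b) \<in> set (turn_orbit h K d)"
  shows "a \<in> {0, h, K}" "b \<in> {0, h, K}" "d = of_bool (a \<in> {0, K}) + of_bool (b \<in> {0, K})"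
  using assms h K by (auto simp: turn_orbit_def split: if_splits)

lemma centre_if_notin_turn_orbit:
  assumes "a \<in> {0, h, K}" "b \<in> {0, h, K}"
    and "(a, b) \<notin> set (turn_orbit h K (of_bool (a \<in> {0, K}) + of_bool (b \<in> {0, K})))"
  shows "a = h \<and> b = h"
  using assms h K by (auto simp: turn_orbit_def)

end

lemma finite_positions: "finite (positions k n)"
proof (rule finite_subset)
  show "positions k n \<subseteq> {f. \<forall>x. (x \<in> {..<n} \<longrightarrow> f x \<in> {..<k}) \<and> (x \<notin> {..<n} \<longrightarrow> f x = 0)}"
    by (auto simp: positions_def)
qed (rule finite_set_of_finite_funs; simp)

lemma finite_Cset: "finite (Cset k n m)"
  by (rule finite_subset[OF _ finite_positions]) (auto simp: Cset_def)

definition extremal_coords :: "nat \<Rightarrow> nat \<Rightarrow> (nat \<Rightarrow> nat) \<Rightarrow> nat set" where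
  "extremal_coords k n p = {l. l < n \<and> p l \<in> {0, k - 1}}"

lemma Cset_eq:
  "Cset k n m = {p \<in> positions k n. card (extremal_coords k n p) = m \<and>
                  (\<forall>l<n. p l \<in> {0, centre k, k - 1})}"
  by (auto simp: Cset_def extremal_coords_def)

definition on_plane :: "nat \<Rightarrow> nat \<Rightarrow> nat \<Rightarrow> (nat \<Rightarrow> nat) \<Rightarrow> (nat \<Rightarrow> nat) \<Rightarrow> bool" where
  "on_plane n i j c p \<longleftrightarrow> (\<forall>l<n. l \<noteq> i \<and> l \<noteq> j \<longrightarrow> p l = c l)"

definition plane_pt :: "nat \<Rightarrow> nat \<Rightarrow> nat \<Rightarrow> (nat \<Rightarrow> nat) \<Rightarrow> nat \<Rightarrow> nat \<Rightarrow> (nat \<Rightarrow> nat)" where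
  "plane_pt n i j c a b = (\<lambda>l. if l = i then a else if l = j then b else if l < n then c l else 0)"

lemma move_off_plane: "\<not> on_plane n i j c p \<Longrightarrow> move k n i j c p = p"
  unfolding move_def on_plane_def by (rule if_not_P)

lemma move_plane_pt:
  "i \<noteq> j \<Longrightarrow> move k n i j c (plane_pt n i j c a b) = plane_pt n i j c (k - 1 - b) a"
  by (auto simp: move_def psi_def plane_pt_def fun_eq_iff)

lemma inj_plane_pt: "i \<noteq> j \<Longrightarrow> inj (\<lambda>(a, b). plane_pt n i j c a b)"
  by (auto simp: inj_def plane_pt_def fun_eq_iff)

lemma eq_plane_pt_if_on_plane:
  "p \<in> positions k n \<Longrightarrow> on_plane n i j c p \<Longrightarrow> p = plane_pt n i j c (p i) (p j)"
  by (auto simp: positions_def on_plane_def plane_pt_def fun_eq_iff)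

lemma card_extremal_coords_plane_pt:
  assumes "i < n" "j < n" "i \<noteq> j"
  shows "card (extremal_coords k n (plane_pt n i j c a b)) =
           card (extremal_coords k n c - {i, j}) + of_bool (a \<in> {0, k - 1}) + of_bool (b \<in> {0, k - 1})"
proof -
  let ?E = "extremal_coords k n c - {i, j}"
  have "extremal_coords k n (plane_pt n i j c a b) =
          ?E \<union> {l. l = i \<and> a \<in> {0, k - 1}} \<union> {l. l = j \<and> b \<in> {0, k - 1}}"
    using assms by (auto simp: extremal_coords_def plane_pt_def)
  moreover have "finite ?E" by (simp add: extremal_coords_def)
  ultimately show ?thesis
    using assms by (simp add: card_Un_disjoint)
qed

definition move_cycle :: "nat \<Rightarrow> nat \<Rightarrow> nat \<Rightarrow> nat \<Rightarrow> (nat \<Rightarrow> nat) \<Rightarrow> nat \<Rightarrow> (nat \<Rightarrow> nat) list" where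
  "move_cycle k n i j c m = map (\<lambda>(a, b). plane_pt n i j c a b)
     (turn_orbit (centre k) (k - 1) (m - card (extremal_coords k n c - {i, j})))"

context
  fixes k n i j :: nat and c :: "nat \<Rightarrow> nat"
  assumes k: "2 \<le> k" "odd k" and ij: "i < n" "j < n" "i \<noteq> j"
    and c_grid: "\<forall>l<n. l \<noteq> i \<and> l \<noteq> j \<longrightarrow> c l \<in> {0, centre k, k - 1}"
begin

abbreviation (input) e where "e \<equiv> card (extremal_coords k n c - {i, j})"

lemma plane_pt_in_Cset:
  assumes "a \<in> {0, centre k, k - 1}" "b \<in> {0, centre k, k - 1}"
  shows "plane_pt n i j c a b \<in> Cset k n (e + of_bool (a \<in> {0, k - 1}) + of_bool (b \<in> {0, k - 1}))"
proof -
  have "plane_pt n i j c a b \<in> positions k n"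
    using assms c_grid k ij by (auto simp: positions_def plane_pt_def)
  moreover have "\<forall>l<n. plane_pt n i j c a b l \<in> {0, centre k, k - 1}"
    using assms c_grid by (simp add: plane_pt_def)
  ultimately show ?thesis
    by (simp add: Cset_eq card_extremal_coords_plane_pt[OF ij])
qed

lemma Cset_on_plane:
  assumes "p \<in> Cset k n m" "on_plane n i j c p"
  obtains a b where "a \<in> {0, centre k, k - 1}" "b \<in> {0, centre k, k - 1}" "p = plane_pt n i j c a b"
    "m = e + of_bool (a \<in> {0, k - 1}) + of_bool (b \<in> {0, k - 1})"
proof
  have p: "p \<in> positions k n" "card (extremal_coords k n p) = m" "\<forall>l<n. p l \<in> {0, centre k, k - 1}"
    using assms(1) by (simp_all add: Cset_eq)
  show "p i \<in> {0, centre k, k - 1}" "p j \<in> {0, centre k, k - 1}"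
    using p(3) ij by blast+
  show eq: "p = plane_pt n i j c (p i) (p j)"
    using eq_plane_pt_if_on_plane[OF p(1) assms(2)] .
  show "m = e + of_bool (p i \<in> {0, k - 1}) + of_bool (p j \<in> {0, k - 1})"
    using p(2) card_extremal_coords_plane_pt[OF ij, of k c "p i" "p j"] eq by simp
qed

lemma distinct_move_cycle: "distinct (move_cycle k n i j c m)"
proof -
  have "inj_on (\<lambda>(a, b). plane_pt n i j c a b) S" for S
    using inj_plane_pt[OF ij(3)] by (rule inj_on_subset) simp
  then show ?thesis
    using distinct_turn_orbit[OF centre_of_odd[OF k]] by (simp add: move_cycle_def distinct_map)
qed

lemma length_move_cycle:
  "length (move_cycle k n i j c m) = (if m = e + 1 \<or> m = e + 2 then 4 else 0)"
  by (auto simp: move_cycle_def length_turn_orbit)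

lemma set_move_cycle_subset: "set (move_cycle k n i j c m) \<subseteq> Cset k n m"
proof
  fix x assume "x \<in> set (move_cycle k n i j c m)"
  then obtain a b where x: "x = plane_pt n i j c a b"
    and ab: "(a, b) \<in> set (turn_orbit (centre k) (k - 1) (m - e))"
    by (auto simp: move_cycle_def)
  note mem = mem_turn_orbit[OF centre_of_odd[OF k] ab]
  have "m = e + of_bool (a \<in> {0, k - 1}) + of_bool (b \<in> {0, k - 1})"
    using ab mem(3) by (auto simp: turn_orbit_def split: if_splits)
  then show "x \<in> Cset k n m"
    using plane_pt_in_Cset[OF mem(1,2)] x by simp
qed

lemma move_rotates_move_cycle:
  "map (move k n i j c) (move_cycle k n i j c m) = rotate1 (move_cycle k n i j c m)"
proof -
  let ?pt = "\<lambda>(a, b). plane_pt n i j c a b" and ?orbit = "turn_orbit (centre k) (k - 1) (m - e)"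
  have "map (move k n i j c) (move_cycle k n i j c m) = map ?pt (map (\<lambda>(a, b). (k - 1 - b, a)) ?orbit)"
    using ij by (simp add: move_cycle_def move_plane_pt case_prod_unfold)
  also have "\<dots> = map ?pt (rotate1 ?orbit)"
    by (simp only: turn_rotates_turn_orbit[OF centre_of_odd[OF k]])
  also have "\<dots> = rotate1 (move_cycle k n i j c m)"
    by (simp add: move_cycle_def rotate1_map)
  finally show ?thesis .
qed

lemma move_fixes_Cset_off_move_cycle:
  assumes x: "x \<in> Cset k n m - set (move_cycle k n i j c m)"
  shows "move k n i j c x = x"
proof (cases "on_plane n i j c x")
  case True
  obtain a b where ab: "a \<in> {0, centre k, k - 1}" "b \<in> {0, centre k, k - 1}"
    and x_eq: "x = plane_pt n i j c a b"
    and m: "m = e + of_bool (a \<in> {0, k - 1}) + of_bool (b \<in> {0, k - 1})"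
    using Cset_on_plane[OF _ True] x by blast
  have "(a, b) \<notin> set (turn_orbit (centre k) (k - 1) (of_bool (a \<in> {0, k - 1}) + of_bool (b \<in> {0, k - 1})))"
    using x by (auto simp: x_eq m move_cycle_def)
  then have centre: "a = centre k \<and> b = centre k"
    using centre_if_notin_turn_orbit[OF centre_of_odd[OF k] ab] by blast
  have "move k n i j c x = plane_pt n i j c (k - 1 - b) a"
    unfolding x_eq by (rule move_plane_pt[OF ij(3)])
  also have "k - 1 - b = b"
    using centre centre_of_odd[OF k] by linarith
  finally show ?thesis
    using centre x_eq by simp
qed (rule move_off_plane)

end

lemma card_extremal_coords_outside_le:
  assumes "i < n" "j < n" "i \<noteq> j"
  shows "card (extremal_coords k n c - {i, j}) + 2 \<le> n"
proof -
  have "card (extremal_coords k n c - {i, j}) \<le> card ({..<n} - {i, j})"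
    by (rule card_mono) (auto simp: extremal_coords_def)
  also have "\<dots> = n - 2"
    using assms by (simp add: card_Diff_subset)
  finally show ?thesis
    using assms by linarith
qed

lemma even_on_blocks_move:
  assumes k: "2 \<le> k" "odd k" and valid: "valid_move k n (i, j, c)"
  shows "even_on_blocks {1..n} (Cset k n) (move k n i j c)"
proof -
  have ij: "i < n" "j < n" "i \<noteq> j"
    using valid by (simp_all add: valid_move_def)
  let ?e = "card (extremal_coords k n c - {i, j})"
  show ?thesis
  proof (cases "\<forall>l<n. l \<noteq> i \<and> l \<noteq> j \<longrightarrow> c l \<in> {0, centre k, k - 1}")
    case True
    note cycle = distinct_move_cycle[OF k ij True] set_move_cycle_subset[OF k ij True]
      move_rotates_move_cycle[OF k ij True] move_fixes_Cset_off_move_cycle[OF k ij True]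
    have bij: "bij_betw (move k n i j c) (Cset k n m) (Cset k n m)" for m
      using bij_betw_if_rotates_cycle[OF cycle] .
    have sign: "sign_on (Cset k n m) (move k n i j c) = (if m = ?e + 1 \<or> m = ?e + 2 then -1 else 1)" for m
      using sign_on_if_rotates_cycle[OF cycle] by (simp add: length_move_cycle[OF k ij True])
    have "(\<Prod>m=1..n. sign_on (Cset k n m) (move k n i j c)) =
            (\<Prod>m\<in>{?e + 1, ?e + 2}. sign_on (Cset k n m) (move k n i j c))"
      using card_extremal_coords_outside_le[OF ij, of k c] by (intro prod.mono_neutral_right) (auto simp: sign)
    also have "\<dots> = 1"
      by (simp add: sign)
    finally show ?thesis
      using bij by (simp add: even_on_blocks_def)
  next
    case False
    then obtain l where l: "l < n" "l \<noteq> i" "l \<noteq> j" "c l \<notin> {0, centre k, k - 1}"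
      by blast
    have "\<not> on_plane n i j c x" if "x \<in> Cset k n m" for x m
    proof -
      have "x l \<in> {0, centre k, k - 1}"
        using that l(1) by (simp add: Cset_eq)
      then show ?thesis
        using l by (auto simp: on_plane_def)
    qed
    then have fixed: "move k n i j c x = id x" if "x \<in> Cset k n m" for x m
      using that move_off_plane by simp
    have "bij_betw (move k n i j c) (Cset k n m) (Cset k n m)" for m
      by (subst bij_betw_cong[OF fixed]) simp_all
    moreover have "sign_on (Cset k n m) (move k n i j c) = 1" for m
      using sign_on_cong[OF refl fixed] by simp
    ultimately show ?thesis
      by (simp add: even_on_blocks_def)
  qed
qed

lemma even_on_blocks_apply_moves:
  assumes k: "2 \<le> k" "odd k" and valid: "\<forall>mv\<in>set ms. valid_move k n mv"
  shows "even_on_blocks {1..n} (Cset k n) (apply_moves k n ms)"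
  using valid
proof (induction ms)
  case Nil
  have "apply_moves k n [] = id"
    by (simp add: apply_moves_def)
  then show ?case
    by (simp only: even_on_blocks_id)
next
  case (Cons mv ms)
  obtain i j c where mv: "mv = (i, j, c)"
    by (cases mv) auto
  have split: "apply_moves k n (mv # ms) = apply_moves k n ms \<circ> move k n i j c"
    by (simp add: apply_moves_def mv)
  have "even_on_blocks {1..n} (Cset k n) (apply_moves k n ms)"
    using Cons by simp
  moreover have "even_on_blocks {1..n} (Cset k n) (move k n i j c)"
    using Cons.prems mv even_on_blocks_move[OF k] by simp
  ultimately show ?case
    unfolding split by (rule even_on_blocks_comp[OF finite_Cset])
qed

theorem mainTheorem10:
  fixes k n :: nat and g :: "(nat \<Rightarrow> nat) \<Rightarrow> (nat \<Rightarrow> nat)"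
  assumes "k \<ge> 2" and "n \<ge> 3" and "odd k" and "combination k n g"
  shows "(\<forall>m\<in>{1..n}. g ` Cset k n m = Cset k n m) \<and>
         (\<Prod>m=1..n. sign_on (Cset k n m) g) = 1"
proof -
  obtain ms where "\<forall>mv\<in>set ms. valid_move k n mv" "g = apply_moves k n ms"
    using assms(4) by (auto simp: combination_def)
  then have "even_on_blocks {1..n} (Cset k n) g"
    using even_on_blocks_apply_moves assms(1,3) by blast
  then show ?thesis
    by (simp add: even_on_blocks_def bij_betw_def)
qed

end
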